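(* Let $l$ be prime. The variety $\mathcal{L}_l$ contains exactly two irreducible Humbert surfaces (those of discriminants $l$ and $4l$) if $l\equiv 1\pmod 4$, and exactly one irreducible Humbert surface (that of discriminant $4l$) otherwise.
   Context: $\mathcal{L}_l\subset\mathcal{A}_2$ is the reduced subvariety of the moduli space of complex principally polarized abelian surfaces consisting of those surfaces admitting an $(l,l)$-isogeny to themselves, where an $(l,l)$-isogeny $f:(A,E)\to(B,E')$ is an isogeny with $E'(f(u),f(v))=lE(u,v)$ and $\ker f\subseteq A[l]$ for the Riemann forms $E,E'$ of the polarizations. The Humbert surface $H_D$ of discriminant $D$ is the (irreducible) locus of principally polarized abelian surfaces whose endomorphism ring contains a copy of the real quadratic order of discriminant $D$ on which the Rosati involution acts trivially; a Humbert surface contained in $\mathcal{L}_l$ means one arising from the action of $\mathbb{Z}[\sqrt{l}]$ by an $(l,l)$-endomorphism $x$ with $x^2=l$, $x'=x$. *)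

theory Defs
  imports "HOL-Analysis.Analysis" "HOL-Library.Numeral_Type"
begin

text \<open>Complex ppav of dimension 2 via the Siegel upper half space: a point tau
  (symmetric 2x2 complex matrix with positive definite imaginary part) gives the
  abelian surface C^2 / Lambda, Lambda = Omega Z^4, Omega = (tau | I), with the
  principal polarization whose Riemann form on Lambda = Z^4 has matrix J.\<close>

definition siegel :: "(complex^2^2) set" where
  "siegel = {tau. (\<forall>i j. tau$i$j = tau$j$i) \<and>
      (\<forall>x::real^2. x \<noteq> 0 \<longrightarrow> (\<Sum>i\<in>UNIV. \<Sum>j\<in>UNIV. x$i * Im (tau$i$j) * x$j) > 0)}"

definition period :: "complex^2^2 \<Rightarrow> complex^4^2" where
  "period tau = (\<chi> i j. if j = 0 then tau$i$0 else if j = 1 then tau$i$1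
                       else if j = 2 then (if i = 0 then 1 else 0)
                       else (if i = 1 then 1 else 0))"

definition Jmat :: "int^4^4" where
  "Jmat = (\<chi> i j. if i = 0 \<and> j = 2 then 1 else if i = 1 \<and> j = 3 then 1
                  else if i = 2 \<and> j = 0 then -1 else if i = 3 \<and> j = 1 then -1 else 0)"

definition cmat :: "int^4^4 \<Rightarrow> complex^4^4" where
  "cmat M = (\<chi> i j. of_int (M$i$j))"

definition rmat :: "int^4^4 \<Rightarrow> real^4^4" where
  "rmat M = (\<chi> i j. of_int (M$i$j))"

definition smat :: "int \<Rightarrow> int^4^4 \<Rightarrow> int^4^4" where
  "smat c M = (\<chi> i j. c * M$i$j)"

text \<open>Endomorphisms of the abelian surface: rational representations M (acting on
  Lambda = Z^4) that are induced by a C-linear map A of C^2.\<close>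
definition End_ab :: "complex^2^2 \<Rightarrow> (int^4^4) set" where
  "End_ab tau = {M. \<exists>A::complex^2^2. A ** period tau = period tau ** cmat M}"

text \<open>Rosati involution of the principal polarization: M' = J^{-1} M^T J (J^{-1} = J^T).\<close>
definition rosati :: "int^4^4 \<Rightarrow> int^4^4" where
  "rosati M = transpose Jmat ** transpose M ** Jmat"

text \<open>(l,l)-isogeny from the surface to itself: an isogeny M (det nonzero) with
  E(Mu,Mv) = l E(u,v) and kernel contained in A[l]. Points of the torus are
  real coordinate vectors x (point Omega x) modulo Z^4.\<close>
definition int_vec :: "real^4 \<Rightarrow> bool" where
  "int_vec v \<longleftrightarrow> (\<forall>i. v$i \<in> \<int>)"

definition ll_endo :: "int \<Rightarrow> complex^2^2 \<Rightarrow> int^4^4 \<Rightarrow> bool" where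
  "ll_endo l tau M \<longleftrightarrow> M \<in> End_ab tau \<and> det M \<noteq> 0 \<and>
      transpose M ** Jmat ** M = smat l Jmat \<and>
      (\<forall>v::real^4. int_vec (rmat M *v v) \<longrightarrow> int_vec (of_int l *\<^sub>R v))"

definition L_var :: "int \<Rightarrow> (complex^2^2) set" where
  "L_var l = {tau \<in> siegel. \<exists>M. ll_endo l tau M}"

definition real_quad_disc :: "int \<Rightarrow> bool" where
  "real_quad_disc D \<longleftrightarrow> D > 0 \<and> (\<nexists>k. D = k * k) \<and> (D mod 4 = 0 \<or> D mod 4 = 1)"

text \<open>Humbert surface H_D: End contains a (primitively embedded) copy of
  O_D = Z[w], w = (D + sqrt D)/2, w^2 = D w - (D^2 - D)/4, on which Rosati is trivial.
  A ring embedding of O_D is the same as an image X of w satisfying that relation.\<close>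
definition humbert :: "int \<Rightarrow> (complex^2^2) set" where
  "humbert D = {tau \<in> siegel. \<exists>X \<in> End_ab tau. rosati X = X \<and>
      X ** X = smat D X - smat ((D*D - D) div 4) (mat 1) \<and>
      (\<forall>Y \<in> End_ab tau. \<forall>k a b. k \<noteq> 0 \<and> smat k Y = smat a (mat 1) + smat b X
            \<longrightarrow> k dvd a \<and> k dvd b)}"

end

theory Submission
  imports Defs
begin

(* On H_D there is a Rosati-invariant endomorphism X with
   X^2 = D X - (D^2 - D)/4.  For D = 4l the element x = X - 2l satisfies x^2 = l,
   for D = l = 4k + 1 the element x = 2X - l does; any Rosati-invariant
   endomorphism with x^2 = l is an (l,l)-endomorphism, so H_D lies in L_l.

   For every discriminant D = 4n + b (b = 0, 1, n >= 1) we write down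
   an explicit period matrix tau_D whose entries involve q = sqrt 2 and
   r = i * 3^(1/4).  Since 1, sqrt 2, sqrt 3, sqrt 6 are linearly independent
   over Q, the endomorphism ring of tau_D is exactly Z[X] for the generator X of
   O_D, so tau_D lies in H_D.  If H_D lies in L_l, tau_D carries an
   (l,l)-endomorphism a + c X; the polarization condition then becomes a norm
   equation forcing D = l or D = 4l. *)

lemma square_mod_4: "(x::int) * x mod 4 = 0 \<or> x * x mod 4 = 1"
proof -
  have "x mod 4 \<in> {0,1,2,3}" by auto
  moreover have "x * x mod 4 = ((x mod 4) * (x mod 4)) mod 4" by (simp add: mod_mult_eq)
  ultimately show ?thesis by auto
qed

text \<open>If k is 2 or 3 modulo 4, then x^2 = k y^2 has only the trivial solution:
  an odd y contradicts the squares modulo 4, an even y allows descent to y/2.\<close>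
lemma square_eq_mult_square_mod_4:
  assumes k: "k mod 4 = 2 \<or> k mod 4 = 3" and eq: "(x::int) * x = k * (y * y)"
  shows "y = 0"
  using eq
proof (induction "nat \<bar>y\<bar>" arbitrary: x y rule: less_induct)
  case less
  show ?case
  proof (cases "even y")
    case False
    then have "y mod 4 = 1 \<or> y mod 4 = 3" by presburger
    moreover have "y * y mod 4 = ((y mod 4) * (y mod 4)) mod 4" by (simp add: mod_mult_eq)
    ultimately have "y * y mod 4 = 1" by auto
    then have "k * (y * y) mod 4 = k mod 4" by (metis mod_mult_right_eq mult.right_neutral)
    with less.prems k square_mod_4[of x] show ?thesis by auto
  next
    case True
    then obtain y' where y': "y = 2 * y'" by blast
    have "even (x * x)" using less.prems y' by simp
    then obtain x' where x': "x = 2 * x'" by auto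
    have descent: "x' * x' = k * (y' * y')" using less.prems x' y' by (simp add: algebra_simps)
    show ?thesis
    proof (cases "y = 0")
      case False
      then have "nat \<bar>y'\<bar> < nat \<bar>y\<bar>" using y' by auto
      from less.hyps[OF this descent] y' show ?thesis by simp
    qed simp
  qed
qed

lemma sqrt_mod_4_irrational:
  assumes "k mod 4 = 2 \<or> k mod 4 = 3" "k > 0" "real_of_int d * sqrt (of_int k) = of_int N"
  shows "d = 0"
proof -
  have "(real_of_int d * sqrt (of_int k))^2 = (of_int N)^2" using assms(3) by simp
  then have "real_of_int (d * d * k) = of_int (N * N)"
    using assms(2) by (simp add: power2_eq_square algebra_simps)
  then have "N * N = k * (d * d)" by (simp only: of_int_eq_iff) (simp add: algebra_simps)
  from square_eq_mult_square_mod_4[OF assms(1) this] show ?thesis .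
qed

lemma sqrt2_independent: "real_of_int a + of_int b * sqrt 2 = 0 \<Longrightarrow> a = 0 \<and> b = 0"
  using sqrt_mod_4_irrational[of 2 b "-a"] by auto

text \<open>1, sqrt 2, sqrt 3 are linearly independent over the integers (squaring
  reduces this to the irrationality of sqrt 6, sqrt 3 and sqrt 2).\<close>
lemma sqrt2_sqrt3_independent:
  assumes "real_of_int a + of_int b * sqrt 2 + of_int c * sqrt 3 = 0"
  shows "a = 0 \<and> b = 0 \<and> c = 0"
proof -
  have "of_int b * sqrt 2 + of_int c * sqrt 3 = - real_of_int a" using assms by simp
  then have "(of_int b * sqrt 2 + of_int c * sqrt 3)^2 = (real_of_int a)^2" by simp
  then have "2*b*b + 3*c*c + 2 * of_int (b*c) * (sqrt 2 * sqrt 3) = (real_of_int (a*a))"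
    by (simp add: power2_eq_square algebra_simps)
  moreover have "sqrt 2 * sqrt 3 = sqrt (of_int 6)" by (simp add: real_sqrt_mult[symmetric])
  ultimately have "real_of_int (2*b*c) * sqrt (of_int 6) = of_int (a*a - 2*b*b - 3*c*c)"
    by (simp add: algebra_simps)
  from sqrt_mod_4_irrational[OF _ _ this] have "b * c = 0" by simp
  then consider "b = 0" | "c = 0" by auto
  then show ?thesis
  proof cases
    case 1
    with assms have "real_of_int c * sqrt (of_int 3) = of_int (-a)" by simp
    from sqrt_mod_4_irrational[OF _ _ this] 1 assms show ?thesis by simp
  next
    case 2
    with assms sqrt2_independent show ?thesis by simp
  qed
qed

definition qq :: complex where "qq = complex_of_real (sqrt 2)"
definition uu :: real where "uu = sqrt (sqrt 3)"
definition rr :: complex where "rr = \<i> * complex_of_real uu"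

lemma uu_pos: "uu > 0" by (simp add: uu_def)
lemma uu_sq: "uu * uu = sqrt 3" by (simp add: uu_def)

definition qr_poly :: "int \<Rightarrow> int \<Rightarrow> int \<Rightarrow> int \<Rightarrow> int \<Rightarrow> int \<Rightarrow> complex" where
  "qr_poly c00 c10 c01 c20 c11 c02 =
     of_int c00 + of_int c10 * qq + of_int c01 * rr + of_int c20 * qq^2
       + of_int c11 * (qq * rr) + of_int c02 * rr^2"

text \<open>The only relation among 1, q, r, q^2, qr, r^2 is q^2 = 2: the real part
  involves 1, sqrt 2, sqrt 3 and the imaginary part is 3^(1/4) (c01 + c11 sqrt 2).\<close>
lemma qr_poly_eq_0:
  assumes "qr_poly c00 c10 c01 c20 c11 c02 = 0"
  shows "c00 + 2*c20 = 0 \<and> c10 = 0 \<and> c01 = 0 \<and> c11 = 0 \<and> c02 = 0"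
proof -
  let ?p = "qr_poly c00 c10 c01 c20 c11 c02"
  have re: "Re ?p = of_int (c00 + 2*c20) + of_int c10 * sqrt 2 + of_int (-c02) * sqrt 3"
    by (simp add: qr_poly_def qq_def rr_def power2_eq_square uu_sq[symmetric])
  have im: "Im ?p = uu * (of_int c01 + of_int c11 * sqrt 2)"
    by (simp add: qr_poly_def qq_def rr_def power2_eq_square algebra_simps)
  from re assms have "real_of_int (c00 + 2*c20) + of_int c10 * sqrt 2 + of_int (-c02) * sqrt 3 = 0"
    by simp
  from sqrt2_sqrt3_independent[OF this] have real_part: "c00 + 2*c20 = 0 \<and> c10 = 0 \<and> c02 = 0"
    by simp
  from im assms uu_pos have "real_of_int c01 + of_int c11 * sqrt 2 = 0" by simp
  from sqrt2_independent[OF this] real_part show ?thesis by simp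
qed

lemma UNIV_4_eq: "(UNIV::4 set) = {0,1,2,3}"
proof -
  have "(4::4) = 0" by simp
  then show ?thesis using UNIV_4 by auto
qed

lemma UNIV_2_eq: "(UNIV::2 set) = {0,1}"
proof -
  have "(2::2) = 0" by simp
  then show ?thesis using UNIV_2 by auto
qed

lemma sum_UNIV_2: "(\<Sum>i\<in>(UNIV::2 set). f i) = f 0 + f 1"
  unfolding UNIV_2_eq by simp

lemma sum_UNIV_4: "(\<Sum>i\<in>(UNIV::4 set). f i) = f 0 + f 1 + f 2 + f 3"
  unfolding UNIV_4_eq by (simp add: ac_simps)

lemma all_4: "(\<forall>i::4. P i) \<longleftrightarrow> P 0 \<and> P 1 \<and> P 2 \<and> P 3"
  by (metis UNIV_4_eq UNIV_I insertE singletonD insertI1 insertI2)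

lemma all_2: "(\<forall>i::2. P i) \<longleftrightarrow> P 0 \<and> P 1"
  by (metis UNIV_2_eq UNIV_I insertE singletonD)

definition tauD :: "int \<Rightarrow> int \<Rightarrow> complex^2^2" where
  "tauD n b = (\<chi> i j. if i = 0 \<and> j = 0 then of_int n * rr - of_int b * qq
                     else if i = 1 \<and> j = 1 then rr else qq)"

text \<open>The rational representation of the endomorphism a + c X of tauD n b, where
  X is the generator of O_D (acting on C^2 by the matrix [[0, n], [1, b]]).\<close>
definition Mform :: "int \<Rightarrow> int \<Rightarrow> int \<Rightarrow> int \<Rightarrow> int^4^4" where
  "Mform n b a c = (\<chi> i j. if (i = 0 \<and> j = 0) \<or> (i = 2 \<and> j = 2) then a
     else if (i = 0 \<and> j = 1) \<or> (i = 3 \<and> j = 2) then c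
     else if (i = 1 \<and> j = 0) \<or> (i = 2 \<and> j = 3) then n * c
     else if (i = 1 \<and> j = 1) \<or> (i = 3 \<and> j = 3) then a + b * c else 0)"

lemmas tauD_simps = matrix_matrix_mult_def sum_UNIV_2 sum_UNIV_4 period_def cmat_def tauD_def

text \<open>tauD n b lies in the Siegel upper half space: Im tau = 3^(1/4) diag(n, 1).\<close>
lemma tauD_siegel:
  assumes n: "n \<ge> 1"
  shows "tauD n b \<in> siegel"
proof -
  have sym: "\<forall>i j. tauD n b $i$j = tauD n b $j$i" by (simp add: all_2 tauD_def)
  have pos: "(\<Sum>i\<in>UNIV. \<Sum>j\<in>UNIV. x$i * Im (tauD n b $i$j) * x$j) > 0"
    if "x \<noteq> 0" for x :: "real^2"
  proof -
    have "x$0 \<noteq> 0 \<or> x$1 \<noteq> 0" using that by (auto simp: vec_eq_iff all_2)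
    then have "x$0 * x$0 * n > 0 \<or> x$1 * x$1 > 0" using n by (auto simp: zero_less_mult_iff)
    moreover have "x$0 * x$0 * n \<ge> 0" "x$1 * x$1 \<ge> 0" using n by simp_all
    ultimately have "x$0 * x$0 * n + x$1 * x$1 > 0" by linarith
    then have "(x$0 * x$0 * n + x$1 * x$1) * uu > 0" using uu_pos by simp
    moreover have "(\<Sum>i\<in>UNIV. \<Sum>j\<in>UNIV. x$i * Im (tauD n b $i$j) * x$j)
                   = (x$0 * x$0 * n + x$1 * x$1) * uu"
      by (simp add: sum_UNIV_2 tauD_def qq_def rr_def algebra_simps)
    ultimately show ?thesis by simp
  qed
  show ?thesis unfolding siegel_def using sym pos by blast
qed

text \<open>Columns 2 and 3
  of Omega are the identity, so they determine A from M; columns 0 and 1 then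
  yield four relations between the entries of M, polynomial in q and r.\<close>
lemma End_tauD_relations:
  assumes M: "M \<in> End_ab (tauD n b)"
  shows "qr_poly (- M$2$0) (b*M$0$0 - b*M$2$2 - M$1$0 + M$2$3) (M$2$2*n - M$0$0*n)
           (b*b*M$0$2 - b*M$0$3 - b*M$1$2 + M$1$3) (M$0$3*n + M$1$2*n - 2*b*M$0$2*n)
           (M$0$2*n*n) = 0" (is ?R00)
    and "qr_poly (- M$2$1) (b*M$0$1 - M$1$1 + M$2$2) (M$2$3 - M$0$1*n)
           (M$1$2 - b*M$0$2) (M$0$2*n + M$1$3 - b*M$0$3) (M$0$3*n) = 0" (is ?R01)
    and "qr_poly (- M$3$0) (M$3$3 - b*M$3$2 - M$0$0) (M$3$2*n - M$1$0)
           (M$0$3 - b*M$0$2) (M$0$2*n + M$1$3 - b*M$1$2) (M$1$2*n) = 0" (is ?R10)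
    and "qr_poly (- M$3$1) (M$3$2 - M$0$1) (M$3$3 - M$1$1)
           (M$0$2) (M$0$3 + M$1$2) (M$1$3) = 0" (is ?R11)
proof -
  obtain A where hA: "A ** period (tauD n b) = period (tauD n b) ** cmat M"
    using M unfolding End_ab_def by auto
  have h: "(A ** period (tauD n b))$i$j = (period (tauD n b) ** cmat M)$i$j" for i j
    using hA by simp
  have A00: "A$0$0 = (of_int n*rr - of_int b*qq) * of_int (M$0$2) + qq * of_int (M$1$2)
                     + of_int (M$2$2)"
    using h[of 0 2] by (simp add: tauD_simps)
  have A01: "A$0$1 = (of_int n*rr - of_int b*qq) * of_int (M$0$3) + qq * of_int (M$1$3)
                     + of_int (M$2$3)"
    using h[of 0 3] by (simp add: tauD_simps)
  have A10: "A$1$0 = qq * of_int (M$0$2) + rr * of_int (M$1$2) + of_int (M$3$2)"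
    using h[of 1 2] by (simp add: tauD_simps)
  have A11: "A$1$1 = qq * of_int (M$0$3) + rr * of_int (M$1$3) + of_int (M$3$3)"
    using h[of 1 3] by (simp add: tauD_simps)
  show ?R00 using h[of 0 0] unfolding qr_poly_def
    by (simp add: tauD_simps A00 A01 A10 A11) algebra
  show ?R01 using h[of 0 1] unfolding qr_poly_def
    by (simp add: tauD_simps A00 A01 A10 A11) algebra
  show ?R10 using h[of 1 0] unfolding qr_poly_def
    by (simp add: tauD_simps A00 A01 A10 A11) algebra
  show ?R11 using h[of 1 1] unfolding qr_poly_def
    by (simp add: tauD_simps A00 A01 A10 A11) algebra
qed

text \<open>The endomorphism ring of tauD n b is exactly Z[X]: solving the relations of
  End_tauD_relations with the independence of 1, q, r, qr, r^2 shows that every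
  endomorphism has the form a + c X.\<close>
lemma End_tauD:
  assumes n: "n \<ge> 1" and M: "M \<in> End_ab (tauD n b)"
  shows "M = Mform n b (M$0$0) (M$0$1)"
proof -
  note c00 = qr_poly_eq_0[OF End_tauD_relations(1)[OF M]]
    and c01 = qr_poly_eq_0[OF End_tauD_relations(2)[OF M]]
    and c10 = qr_poly_eq_0[OF End_tauD_relations(3)[OF M]]
    and c11 = qr_poly_eq_0[OF End_tauD_relations(4)[OF M]]
  have n0: "n \<noteq> 0" using n by simp
  have z12: "M$1$2 = 0" using c10 n0 by simp
  have z13: "M$1$3 = 0" using c11 by simp
  have z03: "M$0$3 = 0" using c11 z12 by simp
  have z02: "M$0$2 = 0" using c10 z12 z13 n0 by simp
  have z31: "M$3$1 = 0" using c11 z02 by simp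
  have z30: "M$3$0 = 0" using c10 z02 z03 by simp
  have z21: "M$2$1 = 0" using c01 z02 z12 by simp
  have z20: "M$2$0 = 0" using c00 z02 z03 z12 z13 by simp
  have e22: "M$2$2 = M$0$0" using c00 n0 by (simp add: algebra_simps)
  have e32: "M$3$2 = M$0$1" using c11 by simp
  have e10: "M$1$0 = n * M$0$1" using c10 e32 by (simp add: algebra_simps)
  have e23: "M$2$3 = n * M$0$1" using c01 by (simp add: algebra_simps)
  have e33: "M$3$3 = M$0$0 + b * M$0$1" using c10 e32 by (simp add: algebra_simps)
  have e11: "M$1$1 = M$0$0 + b * M$0$1" using c01 e22 by (simp add: algebra_simps)
  show ?thesis
    unfolding vec_eq_iff all_4 Mform_def
    using z12 z13 z03 z02 z31 z30 z21 z20 e22 e32 e10 e23 e33 e11 by simp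
qed

lemma Mform_End: "Mform n b a c \<in> End_ab (tauD n b)"
proof -
  define A :: "complex^2^2" where
    "A = (\<chi> i j. if i = 0 \<and> j = 0 then of_int a else if i = 0 \<and> j = 1 then of_int (n*c)
                 else if i = 1 \<and> j = 0 then of_int c else of_int (a + b*c))"
  have "A ** period (tauD n b) = period (tauD n b) ** cmat (Mform n b a c)"
    unfolding vec_eq_iff all_2 all_4
    by (simp add: tauD_simps A_def Mform_def algebra_simps)
  then show ?thesis unfolding End_ab_def by blast
qed

lemma rosati_Mform: "rosati (Mform n b a c) = Mform n b a c"
  by (simp add: vec_eq_iff all_4 rosati_def Mform_def matrix_matrix_mult_def sum_UNIV_4
      Jmat_def transpose_def)

lemma Mform_generator_square:
  fixes n b :: int
  assumes "b * b = b"
  defines "D \<equiv> 4 * n + b"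
  shows "Mform n b (2*n) 1 ** Mform n b (2*n) 1
         = smat D (Mform n b (2*n) 1) - smat ((D * D - D) div 4) (mat 1)"
proof -
  have "D * D - D = 4 * (4*n*n + 2*n*b - n)" using assms by (simp add: algebra_simps)
  then have K: "(D * D - D) div 4 = 4*n*n + 2*n*b - n" by simp
  show ?thesis unfolding K unfolding D_def using assms(1)
    by (simp add: vec_eq_iff all_4 Mform_def matrix_matrix_mult_def sum_UNIV_4 smat_def
        mat_def algebra_simps)
qed

text \<open>tauD n b lies on the Humbert surface of discriminant 4n + b; primitivity of
  the embedding of O_D holds because the endomorphism ring is Z[X].\<close>
lemma tauD_humbert:
  assumes n: "n \<ge> 1" and b: "b * b = b"
  shows "tauD n b \<in> humbert (4*n + b)"
proof -
  let ?X = "Mform n b (2*n) 1"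
  have primitive: "\<forall>Y \<in> End_ab (tauD n b). \<forall>k a b'.
      k \<noteq> 0 \<and> smat k Y = smat a (mat 1) + smat b' ?X \<longrightarrow> k dvd a \<and> k dvd b'"
  proof (intro ballI allI impI)
    fix Y k a b'
    assume Y: "Y \<in> End_ab (tauD n b)" and h: "k \<noteq> 0 \<and> smat k Y = smat a (mat 1) + smat b' ?X"
    have "(smat k Y)$0$1 = (smat a (mat 1) + smat b' ?X)$0$1"
      and "(smat k Y)$0$0 = (smat a (mat 1) + smat b' ?X)$0$0" using h by simp_all
    then have b': "k * Y$0$1 = b'" and "k * Y$0$0 = a + b' * (2*n)"
      by (simp_all add: smat_def mat_def Mform_def)
    then have "a = k * (Y$0$0 - Y$0$1 * (2*n))" by (simp add: algebra_simps)
    then show "k dvd a \<and> k dvd b'" using b' by auto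
  qed
  show ?thesis unfolding humbert_def
    using tauD_siegel[OF n] Mform_End[of n b "2*n" 1] rosati_Mform[of n b "2*n" 1]
      Mform_generator_square[OF b, of n] primitive
    by blast
qed

lemma Mform_polarization:
  assumes "transpose (Mform n b a c) ** Jmat ** Mform n b a c = smat l Jmat"
  shows "a * a + n * c * c = l" and "n * c * (2 * a + b * c) = 0"
proof -
  have "(transpose (Mform n b a c) ** Jmat ** Mform n b a c)$0$2 = a * a + n * c * c"
    and "(transpose (Mform n b a c) ** Jmat ** Mform n b a c)$0$3 = n * c * (2 * a + b * c)"
    by (simp_all add: Mform_def matrix_matrix_mult_def sum_UNIV_4 Jmat_def transpose_def
        algebra_simps)
  moreover have "smat l Jmat $0$2 = l" "smat l Jmat $0$3 = 0"
    by (simp_all add: smat_def Jmat_def)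
  ultimately show "a * a + n * c * c = l" and "n * c * (2 * a + b * c) = 0"
    using assms by metis+
qed

definition affine :: "int \<Rightarrow> int \<Rightarrow> int^4^4 \<Rightarrow> int^4^4" where
  "affine s t X = smat s X + smat t (mat 1)"

lemma affine_entry: "affine s t X $ i $ j = s * X$i$j + (if i = j then t else 0)"
  by (simp add: affine_def smat_def mat_def)

text \<open>Endomorphisms form a ring containing Z, so s X + t is again one.\<close>
lemma affine_End:
  assumes "X \<in> End_ab tau"
  shows "affine s t X \<in> End_ab tau"
proof -
  obtain A where hA: "A ** period tau = period tau ** cmat X"
    using assms unfolding End_ab_def by auto
  define B :: "complex^2^2" where
    "B = (\<chi> i j. of_int s * A$i$j + (if i = j then of_int t else 0))"
  have "B ** period tau = (\<chi> i j. of_int s * (A ** period tau)$i$j + of_int t * period tau $i$j)"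
    by (simp add: vec_eq_iff all_2 B_def matrix_matrix_mult_def sum_UNIV_2 algebra_simps)
  moreover have "period tau ** cmat (affine s t X)
      = (\<chi> i j. of_int s * (period tau ** cmat X)$i$j + of_int t * period tau $i$j)"
    by (simp add: vec_eq_iff all_2 all_4 cmat_def affine_entry matrix_matrix_mult_def
        sum_UNIV_4 algebra_simps)
  ultimately show ?thesis unfolding End_ab_def using hA by auto
qed

lemma rosati_affine: "rosati (affine s t X) = affine s t (rosati X)"
  by (simp add: vec_eq_iff all_4 rosati_def affine_entry matrix_matrix_mult_def sum_UNIV_4
      Jmat_def transpose_def)

lemma affine_square:
  "affine s t X ** affine s t X = affine (s * s) 0 (X ** X) + affine (2 * s * t) (t * t) X"
  by (simp add: vec_eq_iff all_4 affine_entry matrix_matrix_mult_def sum_UNIV_4 algebra_simps)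

lemma Jmat_orthogonal: "Jmat ** transpose Jmat = mat 1"
  by (simp add: vec_eq_iff all_4 matrix_matrix_mult_def transpose_def Jmat_def sum_UNIV_4 mat_def)

lemma Jmat_scalar: "Jmat ** mat l = smat l Jmat"
  by (simp add: vec_eq_iff all_4 matrix_matrix_mult_def mat_def smat_def Jmat_def sum_UNIV_4)

lemma det_scalar_4: "det (mat l :: int^4^4) = l^4"
proof -
  have "det (mat l :: int^4^4) = prod (\<lambda>i. (mat l :: int^4^4)$i$i) UNIV"
    by (rule det_diagonal) (simp add: mat_def)
  also have "\<dots> = l^4" by (simp add: mat_def)
  finally show ?thesis .
qed

lemma rmat_mult: "rmat (A ** B) = rmat A ** rmat B"
  by (simp add: vec_eq_iff rmat_def matrix_matrix_mult_def)

lemma rmat_scalar: "rmat (mat l) *v v = of_int l *\<^sub>R v"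
  by (simp add: vec_eq_iff all_4 rmat_def mat_def matrix_vector_mult_def sum_UNIV_4)

lemma int_vec_rmat: "int_vec w \<Longrightarrow> int_vec (rmat Y *v w)"
  unfolding int_vec_def matrix_vector_mult_def rmat_def
  by (auto intro!: Ints_sum Ints_mult)

text \<open>A Rosati-invariant endomorphism x with x^2 = l is an (l,l)-endomorphism:
  Rosati invariance gives x^T J = J x, hence x^T J x = J x^2 = l J, and its
  kernel is killed by l because l = x * x.\<close>
lemma ll_endo_of_square_root:
  assumes End: "Y \<in> End_ab tau" and ros: "rosati Y = Y" and sq: "Y ** Y = mat l"
    and l0: "l \<noteq> 0"
  shows "ll_endo l tau Y"
proof -
  have "det Y * det Y = l^4" using sq det_mul[of Y Y] det_scalar_4 by simp
  then have det: "det Y \<noteq> 0" using l0 by auto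
  have "Jmat ** Y = Jmat ** (transpose Jmat ** transpose Y ** Jmat)"
    using ros by (simp add: rosati_def)
  also have "\<dots> = (Jmat ** transpose Jmat) ** transpose Y ** Jmat" by (simp add: matrix_mul_assoc)
  also have "\<dots> = transpose Y ** Jmat" by (simp add: Jmat_orthogonal)
  finally have "transpose Y ** Jmat ** Y = smat l Jmat"
    by (metis Jmat_scalar matrix_mul_assoc sq)
  moreover have "int_vec (of_int l *\<^sub>R v)" if "int_vec (rmat Y *v v)" for v
  proof -
    have "rmat Y *v (rmat Y *v v) = of_int l *\<^sub>R v"
      by (simp add: matrix_vector_mul_assoc rmat_mult[symmetric] sq rmat_scalar)
    with int_vec_rmat[OF that, of Y] show ?thesis by simp
  qed
  ultimately show ?thesis unfolding ll_endo_def using End det by blast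
qed

lemma affine_square_root:
  assumes sq: "X ** X = smat D X - smat K (mat 1)"
    and e1: "s * s * D + 2 * s * t = 0" and e2: "t * t - s * s * K = l"
  shows "affine s t X ** affine s t X = mat l"
proof -
  have "(affine s t X ** affine s t X)$i$j = (mat l :: int^4^4)$i$j" for i j
  proof -
    have xx: "(X ** X)$i$j = D * X$i$j - (if i = j then K else 0)"
      using sq by (simp add: smat_def mat_def)
    have "(affine s t X ** affine s t X)$i$j
          = s * s * (X ** X)$i$j + (2 * s * t * X$i$j + (if i = j then t * t else 0))"
      unfolding affine_square by (simp add: affine_entry)
    also have "\<dots> = (s * s * D + 2 * s * t) * X$i$j + (if i = j then t * t - s * s * K else 0)"
      unfolding xx by (simp add: algebra_simps)
    also have "\<dots> = (mat l :: int^4^4)$i$j" using e1 e2 by (simp add: mat_def)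
    finally show ?thesis .
  qed
  then show ?thesis by (simp add: vec_eq_iff)
qed

lemma humbert_subset_L_var:
  assumes D: "(D = l \<and> l mod 4 = 1) \<or> D = 4 * l" and l0: "l \<noteq> 0"
  shows "humbert D \<subseteq> L_var l"
proof
  fix tau assume "tau \<in> humbert D"
  then obtain X where si: "tau \<in> siegel" and X: "X \<in> End_ab tau" "rosati X = X"
    and sq: "X ** X = smat D X - smat ((D*D - D) div 4) (mat 1)"
    unfolding humbert_def by auto
  obtain s t where "s * s * D + 2 * s * t = 0" and "t * t - s * s * ((D*D - D) div 4) = l"
    using D
  proof
    assume h: "D = l \<and> l mod 4 = 1"
    then obtain k where k: "l = 4 * k + 1" by (metis div_mult_mod_eq add.commute mult.commute)
    have "(D*D - D) div 4 = 4*k*k + k" using h k by (simp add: algebra_simps)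
    then show ?thesis using that[of 2 "-l"] h k by (simp add: algebra_simps)
  next
    assume h: "D = 4 * l"
    have "(D*D - D) div 4 = 4*l*l - l" using h by (simp add: algebra_simps)
    then show ?thesis using that[of 1 "-2*l"] h by (simp add: algebra_simps)
  qed
  from affine_square_root[OF sq this] have "ll_endo l tau (affine s t X)"
    using ll_endo_of_square_root affine_End[OF X(1)] rosati_affine X(2) l0 by metis
  with si show "tau \<in> L_var l" unfolding L_var_def by blast
qed

lemma prime_not_square:
  assumes "prime (l::int)"
  shows "x * x \<noteq> l"
proof
  assume h: "x * x = l"
  have l1: "l > 1" using assms prime_gt_1_int by blast
  have "\<bar>x\<bar> dvd l" using h by (metis abs_dvd_iff dvd_triv_left)
  then have "\<bar>x\<bar> = 1 \<or> \<bar>x\<bar> = l" using assms by (simp add: prime_int_iff)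
  then have "x * x = 1 \<or> x * x = l * l" by (metis abs_mult_self_eq mult_1)
  with h l1 show False by auto
qed

lemma square_dvd_prime:
  assumes "prime (l::int)" "x * x dvd l"
  shows "x * x = 1"
proof -
  have "x * x \<ge> 0" by simp
  then have "x * x = 1 \<or> x * x = l" using assms by (simp add: prime_int_iff)
  then show ?thesis using prime_not_square[OF assms(1)] by blast
qed

lemma prime_norm_equations:
  assumes l: "prime (l::int)" and n: "n \<ge> 1" and b: "b = 0 \<or> b = 1"
    and e1: "a * a + n * c * c = l" and e2: "n * c * (2 * a + b * c) = 0"
  shows "(b = 0 \<and> n = l) \<or> (b = 1 \<and> 4 * n + 1 = l)"
proof -
  have "c \<noteq> 0" using e1 prime_not_square[OF l, of a] by auto
  with e2 n have e3: "2 * a + b * c = 0" by simp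
  from b show ?thesis
  proof
    assume b0: "b = 0"
    with e3 e1 have "(c * c) * n = l" by (simp add: algebra_simps)
    moreover from this have "c * c = 1" by (metis dvd_triv_left square_dvd_prime[OF l])
    ultimately show ?thesis using b0 by simp
  next
    assume b1: "b = 1"
    with e3 have "c = -2 * a" by simp
    with e1 have "(a * a) * (4 * n + 1) = l" by (simp add: algebra_simps)
    moreover from this have "a * a = 1" by (metis dvd_triv_left square_dvd_prime[OF l])
    ultimately show ?thesis using b1 by simp
  qed
qed

lemma humbert_subset_L_var_disc:
  assumes l: "prime l" and D: "real_quad_disc D" and sub: "humbert D \<subseteq> L_var l"
  shows "(D = l \<and> l mod 4 = 1) \<or> D = 4 * l"
proof -
  define b where "b = D mod 4"
  define n where "n = D div 4"
  have D_eq: "D = 4 * n + b" unfolding b_def n_def by simp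
  have b01: "b = 0 \<or> b = 1" using D unfolding real_quad_disc_def b_def by auto
  have n1: "n \<ge> 1"
  proof (rule ccontr)
    assume "\<not> n \<ge> 1"
    then have "D = 1 * 1" using D D_eq b01 unfolding real_quad_disc_def by auto
    with D show False unfolding real_quad_disc_def by blast
  qed
  have "tauD n b \<in> L_var l"
    using tauD_humbert[OF n1] b01 sub D_eq by auto
  then obtain M where M: "ll_endo l (tauD n b) M" unfolding L_var_def by auto
  then have "M = Mform n b (M$0$0) (M$0$1)" using End_tauD[OF n1] unfolding ll_endo_def by auto
  with M have "transpose (Mform n b (M$0$0) (M$0$1)) ** Jmat ** Mform n b (M$0$0) (M$0$1)
               = smat l Jmat"
    unfolding ll_endo_def by metis
  from prime_norm_equations[OF l n1 b01 Mform_polarization[OF this]] D_eq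
  show ?thesis by auto
qed

lemma real_quad_disc_prime:
  assumes l: "prime l" and D: "(D = l \<and> l mod 4 = 1) \<or> D = 4 * l"
  shows "real_quad_disc D"
proof -
  have l1: "l > 1" using l prime_gt_1_int by blast
  have "D \<noteq> k * k" for k
  proof
    assume k: "D = k * k"
    show False using D
    proof
      assume "D = l \<and> l mod 4 = 1"
      with k prime_not_square[OF l] show False by metis
    next
      assume "D = 4 * l"
      with k have "even (k * k)" by (metis dvd_triv_left mult_2 mult.assoc numeral_Bit0)
      then obtain k' where "k = 2 * k'" by auto
      with k \<open>D = 4 * l\<close> have "l = k' * k'" by simp
      with prime_not_square[OF l] show False by metis
    qed
  qed
  then show ?thesis using D l1 unfolding real_quad_disc_def by auto
qed

theorem corollary4p2:
  fixes l :: int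
  assumes "prime l"
  shows "{D. real_quad_disc D \<and> humbert D \<subseteq> L_var l} =
         (if l mod 4 = 1 then {l, 4 * l} else {4 * l})"
proof -
  have "l \<noteq> 0" using assms by auto
  then have "real_quad_disc D \<and> humbert D \<subseteq> L_var l \<longleftrightarrow> (D = l \<and> l mod 4 = 1) \<or> D = 4 * l"
    for D
    using humbert_subset_L_var_disc[OF assms] real_quad_disc_prime[OF assms]
      humbert_subset_L_var by blast
  then show ?thesis by auto
qed

end
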